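(* Let $J_{mult}\subset dWHA$ be the subgroup spanned by all substitutions $\binom{\rho}{\sigma}$ such that some letter occurs at least twice in $\rho$ or at least twice in $\sigma$. Then $J_{mult}$ is a Hopf ideal of $(dWHA,m,\mu)$: $m(J_{mult}\otimes dWHA)+m(dWHA\otimes J_{mult})\subset J_{mult}$, $\mu(J_{mult})\subset J_{mult}\otimes dWHA+dWHA\otimes J_{mult}$, and $\varepsilon(J_{mult})=0$. Consequently the $\mathbf Z$-linear map $\psi:dWHA\to\varphi(MPR)$ that is the identity on substitutions with no repeated letter in either word and zero on substitutions in $J_{mult}$ is a Hopf algebra morphism and a Hopf algebra retraction of the inclusion $\varphi(MPR)\subset dWHA$.
   Context: Words are finite sequences of letters; $*$ denotes concatenation; the support $\mathrm{supp}(\alpha)$ of a word is the set of letters occurring in it. The shuffle product $\alpha\times_{sh}\beta$ of words $\alpha=[c_1,\dots,c_p]$, $\beta=[d_1,\dots,d_q]$ is the sum, with multiplicities, over all ways of choosing $p$ of the $p+q$ positions, of the word obtained by placing the $c$'s in their original order in the chosen positions and the $d$'s in their original order in the remaining ones. A subword of $[a_1,\dots,a_m]$ is a word $[a_{i_1},\dots,a_{i_r}]$ with $i_1<\dots<i_r$. Definition of $dWHA$: Let $\mathcal X$ be a countably infinite alphabet. A substitution is a pair $p=\binom{\rho}{\sigma}$ of words over $\mathcal X$ with $\mathrm{supp}(\rho)=\mathrm{supp}(\sigma)$, considered up to simultaneously renaming the letters of both words by a bijection of $\mathcal X$. $dWHA$ is the free abelian group with basis all substitutions (including the empty substitution $\binom{[\,]}{[\,]}$),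 graded by $\deg(p)=\#\mathrm{supp}(\rho)$. Multiplication: for substitutions $p=\binom{\rho}{\sigma}$, $p'=\binom{\rho'}{\sigma'}$ written with $\mathrm{supp}(\rho)\cap\mathrm{supp}(\rho')=\emptyset$, $m(p\otimes p')=\binom{\rho*\rho'}{\sigma\times_{sh}\sigma'}$, meaning the sum of $\binom{\rho*\rho'}{\gamma}$ over the terms $\gamma$ (with multiplicity) of $\sigma\times_{sh}\sigma'$. The unit is the empty substitution. A good cut of a word $\sigma$ is a factorization $\sigma=\sigma_1*\sigma_2$ with $\mathrm{supp}(\sigma_1)\cap\mathrm{supp}(\sigma_2)=\emptyset$ (the two trivial cuts included). Comultiplication: $\mu(p)=\sum \binom{p^{-1}(\sigma_1)}{\sigma_1}\otimes\binom{p^{-1}(\sigma_2)}{\sigma_2}$, summed over all good cuts $\sigma=\sigma_1*\sigma_2$, where $p^{-1}(\sigma_i)$ is the subword of $\rho$ consisting of all occurrences in $\rho$ of letters of $\mathrm{supp}(\sigma_i)$. Counit: $\varepsilon$ is $1$ on the empty substitution and $0$ on all other substitutions. This is a Hopf algebra. $\varphi(MPR)$ denotes the sub Hopf algebra of $dWHA$ spanned by the substitutions in which neither the top nor the bottom word has a repeated letter (it is the image of the Hopf algebra of permutations $MPR$ under $[t_1,\dots,t_n]\mapsto\binom{[x_1,\dots,x_n]}{[x_{t_1},\dots,x_{t_n}]}$). *)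

theory Defs
  imports "HOL-Library.Multiset"
begin

type_synonym subst = "nat list \<times> nat list"

definition valid_subst :: "subst \<Rightarrow> bool" where
  "valid_subst p \<longleftrightarrow> set (fst p) = set (snd p)"

text \<open>Canonical representative of the renaming class: letters renamed to 0,1,2,...
  in order of first occurrence in the top word.\<close>
definition rename_idx :: "nat list \<Rightarrow> nat \<Rightarrow> nat" where
  "rename_idx \<rho> a = length (takeWhile (\<lambda>b. b \<noteq> a) (remdups \<rho>))"

definition canon :: "subst \<Rightarrow> subst" where
  "canon p = (map (rename_idx (fst p)) (fst p), map (rename_idx (fst p)) (snd p))"

definition is_basis :: "subst \<Rightarrow> bool" where
  "is_basis p \<longleftrightarrow> valid_subst p \<and> canon p = p"

definition has_mult :: "subst \<Rightarrow> bool" where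
  "has_mult p \<longleftrightarrow> \<not> distinct (fst p) \<or> \<not> distinct (snd p)"

definition dWHA :: "(subst \<Rightarrow> int) set" where
  "dWHA = {x. finite {p. x p \<noteq> 0} \<and> (\<forall>p. x p \<noteq> 0 \<longrightarrow> is_basis p)}"

definition dWHA2 :: "(subst \<times> subst \<Rightarrow> int) set" where
  "dWHA2 = {z. finite {q. z q \<noteq> 0} \<and>
              (\<forall>p p'. z (p, p') \<noteq> 0 \<longrightarrow> is_basis p \<and> is_basis p')}"

definition delta :: "'a \<Rightarrow> 'a \<Rightarrow> int" where
  "delta p = (\<lambda>q. if q = p then 1 else 0)"

definition lin :: "('a \<Rightarrow> 'b \<Rightarrow> int) \<Rightarrow> ('a \<Rightarrow> int) \<Rightarrow> 'b \<Rightarrow> int" where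
  "lin F x = (\<lambda>q. \<Sum>p\<in>{p. x p \<noteq> 0}. x p * F p q)"

definition tens :: "('a \<Rightarrow> int) \<Rightarrow> ('b \<Rightarrow> int) \<Rightarrow> 'a \<times> 'b \<Rightarrow> int" where
  "tens x y = (\<lambda>(p, q). x p * y q)"

definition tens_map :: "(('a \<Rightarrow> int) \<Rightarrow> ('c \<Rightarrow> int)) \<Rightarrow> (('b \<Rightarrow> int) \<Rightarrow> ('d \<Rightarrow> int))
    \<Rightarrow> ('a \<times> 'b \<Rightarrow> int) \<Rightarrow> 'c \<times> 'd \<Rightarrow> int" where
  "tens_map f g z = lin (\<lambda>(p, q). tens (f (delta p)) (g (delta q))) z"

definition ms_vec :: "'a multiset \<Rightarrow> 'a \<Rightarrow> int" where
  "ms_vec M = (\<lambda>q. int (count M q))"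

fun shuffle_ms :: "'a list \<Rightarrow> 'a list \<Rightarrow> 'a list multiset" where
  "shuffle_ms [] ys = {#ys#}"
| "shuffle_ms xs [] = {#xs#}"
| "shuffle_ms (x # xs) (y # ys) =
     image_mset ((#) x) (shuffle_ms xs (y # ys)) + image_mset ((#) y) (shuffle_ms (x # xs) ys)"

definition shift_bound :: "subst \<Rightarrow> nat" where
  "shift_bound p = Suc (Max (insert 0 (set (fst p))))"

definition shift :: "nat \<Rightarrow> nat list \<Rightarrow> nat list" where
  "shift n w = map (\<lambda>a. a + n) w"

definition mult_basis :: "subst \<Rightarrow> subst \<Rightarrow> subst \<Rightarrow> int" where
  "mult_basis p p' = (let N = shift_bound p in
     ms_vec (image_mset (\<lambda>\<gamma>. canon (fst p @ shift N (fst p'), \<gamma>))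
                        (shuffle_ms (snd p) (shift N (snd p')))))"

definition hmult :: "(subst \<times> subst \<Rightarrow> int) \<Rightarrow> subst \<Rightarrow> int" where
  "hmult z = lin (\<lambda>(p, p'). mult_basis p p') z"

definition hunit :: "subst \<Rightarrow> int" where
  "hunit = delta ([], [])"

definition good_cut :: "nat list \<Rightarrow> nat \<Rightarrow> bool" where
  "good_cut \<sigma> k \<longleftrightarrow> k \<le> length \<sigma> \<and> set (take k \<sigma>) \<inter> set (drop k \<sigma>) = {}"

definition restr :: "nat list \<Rightarrow> nat list \<Rightarrow> subst" where
  "restr \<rho> \<sigma>' = canon (filter (\<lambda>a. a \<in> set \<sigma>') \<rho>, \<sigma>')"

definition comult_basis :: "subst \<Rightarrow> subst \<times> subst \<Rightarrow> int" where
  "comult_basis p = (\<lambda>q. \<Sum>k\<in>{k. good_cut (snd p) k}.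
      delta (restr (fst p) (take k (snd p)), restr (fst p) (drop k (snd p))) q)"

definition hcomult :: "(subst \<Rightarrow> int) \<Rightarrow> subst \<times> subst \<Rightarrow> int" where
  "hcomult x = lin comult_basis x"

definition hcounit :: "(subst \<Rightarrow> int) \<Rightarrow> int" where
  "hcounit x = x ([], [])"

definition J_mult :: "(subst \<Rightarrow> int) set" where
  "J_mult = {x \<in> dWHA. \<forall>p. x p \<noteq> 0 \<longrightarrow> has_mult p}"

definition J_tens_A :: "(subst \<times> subst \<Rightarrow> int) set" where
  "J_tens_A = {z \<in> dWHA2. \<forall>p q. z (p, q) \<noteq> 0 \<longrightarrow> has_mult p}"

definition A_tens_J :: "(subst \<times> subst \<Rightarrow> int) set" where
  "A_tens_J = {z \<in> dWHA2. \<forall>p q. z (p, q) \<noteq> 0 \<longrightarrow> has_mult q}"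

definition phi_MPR :: "(subst \<Rightarrow> int) set" where
  "phi_MPR = {x \<in> dWHA. \<forall>p. x p \<noteq> 0 \<longrightarrow> \<not> has_mult p}"

definition psi :: "(subst \<Rightarrow> int) \<Rightarrow> subst \<Rightarrow> int" where
  "psi x = (\<lambda>p. if has_mult p then 0 else x p)"

end

theory Submission
  imports Defs
begin

text \<open>Every basis substitution occurring in a product \<open>m(p \<otimes> p')\<close> has a repeated letter
  exactly when \<open>p\<close> or \<open>p'\<close> has one, and every tensor \<open>q\<^sub>1 \<otimes> q\<^sub>2\<close> occurring in \<open>\<mu>(p)\<close> has
  one in \<open>q\<^sub>1\<close> or in \<open>q\<^sub>2\<close> exactly when \<open>p\<close> has one: renaming letters is injective, a
  shuffle of words with disjoint supports repeats a letter iff one of the words does, and a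
  good cut splits both the bottom word and (by filtering) the top word into pieces on disjoint
  alphabets. Hence the structure maps respect the splitting of the basis by \<open>has_mult\<close>, so
  the span \<open>J_mult\<close> of one half is a Hopf ideal and the projection \<open>psi\<close> onto the span of the
  other half commutes with them.\<close>

lemma lin_nonzero:
  assumes "lin F x q \<noteq> 0"
  obtains p where "x p \<noteq> 0" and "F p q \<noteq> 0"
proof -
  from assms have "(\<Sum>p\<in>{p. x p \<noteq> 0}. x p * F p q) \<noteq> 0" by (simp add: lin_def)
  then obtain p where "p \<in> {p. x p \<noteq> 0}" "x p * F p q \<noteq> 0"
    using sum.not_neutral_contains_not_neutral by blast
  then show thesis using that by simp
qed

lemma finite_lin_support:
  assumes "finite {p. x p \<noteq> 0}" and "\<And>p. x p \<noteq> 0 \<Longrightarrow> finite {q. F p q \<noteq> 0}"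
  shows "finite {q. lin F x q \<noteq> 0}"
proof (rule finite_subset)
  show "{q. lin F x q \<noteq> 0} \<subseteq> (\<Union>p\<in>{p. x p \<noteq> 0}. {q. F p q \<noteq> 0})"
  proof
    fix q assume "q \<in> {q. lin F x q \<noteq> 0}"
    then obtain p where "x p \<noteq> 0" "F p q \<noteq> 0" by (blast elim: lin_nonzero)
    then show "q \<in> (\<Union>p\<in>{p. x p \<noteq> 0}. {q. F p q \<noteq> 0})" by blast
  qed
  show "finite (\<Union>p\<in>{p. x p \<noteq> 0}. {q. F p q \<noteq> 0})"
    using assms by (intro finite_UN_I) auto
qed

lemma lin_eq_sum_superset:
  assumes "finite S" and "{p. x p \<noteq> 0} \<subseteq> S"
  shows "lin F x q = (\<Sum>p\<in>S. x p * F p q)"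
  unfolding lin_def using assms by (intro sum.mono_neutral_left) auto

lemma lin_mask:
  assumes x: "finite {p. x p \<noteq> 0}"
    and compatible: "\<And>p. x p \<noteq> 0 \<Longrightarrow> F p q \<noteq> 0 \<Longrightarrow> P \<longleftrightarrow> Q p"
  shows "lin F (\<lambda>p. if Q p then 0 else x p) q = (if P then 0 else lin F x q)"
proof -
  let ?S = "{p. x p \<noteq> 0}"
  have "lin F (\<lambda>p. if Q p then 0 else x p) q = (\<Sum>p\<in>?S. (if Q p then 0 else x p) * F p q)"
    by (rule lin_eq_sum_superset) (use x in auto)
  also have "\<dots> = (\<Sum>p\<in>?S. if P then 0 else x p * F p q)"
  proof (rule sum.cong)
    fix p assume "p \<in> ?S"
    then show "(if Q p then 0 else x p) * F p q = (if P then 0 else x p * F p q)"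
      using compatible[of p] by (cases "F p q = 0") auto
  qed simp
  also have "\<dots> = (if P then 0 else lin F x q)"
    by (simp add: lin_def)
  finally show ?thesis .
qed

lemma length_takeWhile_neq_nth:
  "distinct xs \<Longrightarrow> i < length xs \<Longrightarrow> length (takeWhile (\<lambda>b. b \<noteq> xs ! i) xs) = i"
proof (induction xs arbitrary: i)
  case (Cons a xs)
  then show ?case by (cases i) (auto simp: nth_mem)
qed simp

lemma length_takeWhile_neq_less:
  "a \<in> set xs \<Longrightarrow> length (takeWhile (\<lambda>b. b \<noteq> a) xs) < length xs"
  by (induction xs) auto

lemma rename_idx_less: "a \<in> set \<rho> \<Longrightarrow> rename_idx \<rho> a < length (remdups \<rho>)"
  unfolding rename_idx_def by (rule length_takeWhile_neq_less) simp

lemma nth_remdups_rename_idx: "a \<in> set \<rho> \<Longrightarrow> remdups \<rho> ! rename_idx \<rho> a = a"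
  using nth_length_takeWhile[of "\<lambda>b. b \<noteq> a" "remdups \<rho>"] rename_idx_less[of a \<rho>]
  unfolding rename_idx_def by simp

lemma inj_on_rename_idx: "inj_on (rename_idx \<rho>) (set \<rho>)"
  by (metis inj_onI nth_remdups_rename_idx)

lemma rename_idx_nth_remdups: "i < length (remdups \<rho>) \<Longrightarrow> rename_idx \<rho> (remdups \<rho> ! i) = i"
  unfolding rename_idx_def by (rule length_takeWhile_neq_nth) auto

lemma remdups_map_inj_on: "inj_on f (set xs) \<Longrightarrow> remdups (map f xs) = map f (remdups xs)"
  by (induction xs) (auto simp: inj_on_def)

lemma remdups_map_rename_idx:
  "remdups (map (rename_idx \<rho>) \<rho>) = [0..<length (remdups \<rho>)]"
  unfolding remdups_map_inj_on[OF inj_on_rename_idx]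
  by (rule nth_equalityI) (auto simp: rename_idx_nth_remdups)

lemma rename_idx_renamed:
  assumes "b \<in> rename_idx \<rho> ` set \<rho>"
  shows "rename_idx (map (rename_idx \<rho>) \<rho>) b = b"
proof -
  have "b < length (remdups \<rho>)" using assms rename_idx_less by auto
  then show ?thesis
    unfolding rename_idx_def remdups_map_rename_idx
    using length_takeWhile_neq_nth[of "[0..<length (remdups \<rho>)]" b] by simp
qed

lemma is_basis_canon:
  assumes "valid_subst q"
  shows "is_basis (canon q)"
proof -
  obtain \<rho> \<sigma> where q: "q = (\<rho>, \<sigma>)" by fastforce
  have \<sigma>: "set \<sigma> = set \<rho>" using assms q by (simp add: valid_subst_def)
  let ?r = "rename_idx \<rho>"
  have canon_q: "canon q = (map ?r \<rho>, map ?r \<sigma>)" by (simp add: canon_def q)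
  have "map (rename_idx (map ?r \<rho>)) (map ?r \<rho>) = map ?r \<rho>"
    by (rule map_idI) (simp add: rename_idx_renamed)
  moreover have "map (rename_idx (map ?r \<rho>)) (map ?r \<sigma>) = map ?r \<sigma>"
    by (rule map_idI) (use \<sigma> in \<open>simp add: rename_idx_renamed\<close>)
  ultimately have "canon (canon q) = canon q" unfolding canon_q by (simp add: canon_def)
  moreover have "valid_subst (canon q)" using \<sigma> unfolding canon_q valid_subst_def by simp
  ultimately show ?thesis by (simp add: is_basis_def)
qed

lemma has_mult_canon: "valid_subst q \<Longrightarrow> has_mult (canon q) = has_mult q"
  using inj_on_rename_idx[of "fst q"]
  by (auto simp: valid_subst_def has_mult_def canon_def distinct_map)

lemma mset_shuffle_ms: "\<gamma> \<in># shuffle_ms xs ys \<Longrightarrow> mset \<gamma> = mset xs + mset ys"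
  by (induction xs ys arbitrary: \<gamma> rule: shuffle_ms.induct) auto

lemma
  assumes "\<gamma> \<in># shuffle_ms xs ys"
  shows distinct_shuffle_ms: "distinct \<gamma> = distinct (xs @ ys)"
    and set_shuffle_ms: "set \<gamma> = set xs \<union> set ys"
proof -
  have mset_\<gamma>: "mset \<gamma> = mset (xs @ ys)" using mset_shuffle_ms[OF assms] by simp
  show "distinct \<gamma> = distinct (xs @ ys)" by (rule mset_eq_imp_distinct_iff[OF mset_\<gamma>])
  show "set \<gamma> = set xs \<union> set ys" using mset_eq_setD[OF mset_\<gamma>] by simp
qed

lemma distinct_filter_partition:
  assumes "set xs \<subseteq> A \<union> B" "A \<inter> B = {}"
  shows "distinct xs \<longleftrightarrow> distinct (filter (\<lambda>a. a \<in> A) xs) \<and> distinct (filter (\<lambda>a. a \<in> B) xs)"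
proof -
  have B: "filter (\<lambda>a. a \<in> B) xs = filter (\<lambda>a. a \<notin> A) xs"
    using assms by (intro filter_cong) auto
  have "mset xs = mset (filter (\<lambda>a. a \<in> A) xs @ filter (\<lambda>a. a \<notin> A) xs)"
    by (simp add: multiset_partition)
  then have "distinct xs \<longleftrightarrow> distinct (filter (\<lambda>a. a \<in> A) xs @ filter (\<lambda>a. a \<notin> A) xs)"
    by (rule mset_eq_imp_distinct_iff)
  also have "\<dots> \<longleftrightarrow> distinct (filter (\<lambda>a. a \<in> A) xs) \<and> distinct (filter (\<lambda>a. a \<notin> A) xs)"
    by (simp add: distinct_append) blast
  finally show ?thesis unfolding B .
qed

lemma mult_basis_nonzero:
  assumes p: "is_basis p" and p': "is_basis p'" and q: "mult_basis p p' q \<noteq> 0"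
  shows "is_basis q \<and> (has_mult q \<longleftrightarrow> has_mult p \<or> has_mult p')"
proof -
  define N where "N = shift_bound p"
  let ?\<rho> = "fst p @ shift N (fst p')"
  obtain \<gamma> where \<gamma>: "\<gamma> \<in># shuffle_ms (snd p) (shift N (snd p'))" and q: "q = canon (?\<rho>, \<gamma>)"
    using q unfolding mult_basis_def Let_def ms_vec_def N_def by (auto simp: count_eq_zero_iff)
  have sp: "set (fst p) = set (snd p)" and sp': "set (fst p') = set (snd p')"
    using p p' by (auto simp: is_basis_def valid_subst_def)
  have valid: "valid_subst (?\<rho>, \<gamma>)"
    using set_shuffle_ms[OF \<gamma>] sp sp' by (simp add: valid_subst_def shift_def)
  have "a < N" if "a \<in> set (fst p)" for a
    using that unfolding N_def shift_bound_def by (simp add: le_imp_less_Suc)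
  then have disjoint: "set (fst p) \<inter> set (shift N (fst p')) = {}"
    by (auto simp: shift_def)
  have "has_mult (?\<rho>, \<gamma>) \<longleftrightarrow> has_mult p \<or> has_mult p'"
    using distinct_shuffle_ms[OF \<gamma>] disjoint sp sp'
    by (auto simp: has_mult_def shift_def distinct_map inj_on_def)
  then show ?thesis using is_basis_canon[OF valid] has_mult_canon[OF valid] q by simp
qed

lemma comult_basis_nonzero_good_cut:
  assumes "comult_basis p q \<noteq> 0"
  obtains k where "good_cut (snd p) k"
    and "q = (restr (fst p) (take k (snd p)), restr (fst p) (drop k (snd p)))"
proof -
  from assms have "(\<Sum>k\<in>{k. good_cut (snd p) k}.
      delta (restr (fst p) (take k (snd p)), restr (fst p) (drop k (snd p))) q) \<noteq> 0"
    by (simp add: comult_basis_def)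
  then obtain k where "k \<in> {k. good_cut (snd p) k}"
    "delta (restr (fst p) (take k (snd p)), restr (fst p) (drop k (snd p))) q \<noteq> 0"
    using sum.not_neutral_contains_not_neutral by blast
  then show thesis using that by (auto simp: delta_def split: if_splits)
qed

lemma
  assumes "set \<sigma> \<subseteq> set \<rho>"
  shows is_basis_restr: "is_basis (restr \<rho> \<sigma>)"
    and has_mult_restr: "has_mult (restr \<rho> \<sigma>) \<longleftrightarrow> \<not> distinct (filter (\<lambda>a. a \<in> set \<sigma>) \<rho>) \<or> \<not> distinct \<sigma>"
proof -
  have valid: "valid_subst (filter (\<lambda>a. a \<in> set \<sigma>) \<rho>, \<sigma>)"
    using assms by (auto simp: valid_subst_def)
  show "is_basis (restr \<rho> \<sigma>)" using is_basis_canon[OF valid] by (simp add: restr_def)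
  show "has_mult (restr \<rho> \<sigma>) \<longleftrightarrow> \<not> distinct (filter (\<lambda>a. a \<in> set \<sigma>) \<rho>) \<or> \<not> distinct \<sigma>"
    using has_mult_canon[OF valid] by (simp add: restr_def has_mult_def)
qed

lemma comult_basis_nonzero:
  assumes p: "valid_subst p" and q: "comult_basis p (q\<^sub>1, q\<^sub>2) \<noteq> 0"
  shows "is_basis q\<^sub>1 \<and> is_basis q\<^sub>2 \<and> (has_mult p \<longleftrightarrow> has_mult q\<^sub>1 \<or> has_mult q\<^sub>2)"
proof -
  obtain \<rho> \<sigma> where p_eq: "p = (\<rho>, \<sigma>)" by fastforce
  obtain k where k: "good_cut \<sigma> k"
    and q\<^sub>1: "q\<^sub>1 = restr \<rho> (take k \<sigma>)" and q\<^sub>2: "q\<^sub>2 = restr \<rho> (drop k \<sigma>)"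
    using comult_basis_nonzero_good_cut[OF q] p_eq by auto
  have disjoint: "set (take k \<sigma>) \<inter> set (drop k \<sigma>) = {}" using k by (simp add: good_cut_def)
  have \<sigma>_split: "set \<sigma> = set (take k \<sigma>) \<union> set (drop k \<sigma>)"
    by (metis append_take_drop_id set_append)
  have \<rho>: "set \<rho> = set \<sigma>" using p p_eq by (simp add: valid_subst_def)
  have distinct_\<sigma>: "distinct \<sigma> \<longleftrightarrow> distinct (take k \<sigma>) \<and> distinct (drop k \<sigma>)"
    using disjoint by (metis append_take_drop_id distinct_append)
  have distinct_\<rho>: "distinct \<rho> \<longleftrightarrow> distinct (filter (\<lambda>a. a \<in> set (take k \<sigma>)) \<rho>)
      \<and> distinct (filter (\<lambda>a. a \<in> set (drop k \<sigma>)) \<rho>)"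
    using \<rho> \<sigma>_split disjoint by (intro distinct_filter_partition) auto
  have "set (take k \<sigma>) \<subseteq> set \<rho>" "set (drop k \<sigma>) \<subseteq> set \<rho>"
    using \<rho> \<sigma>_split by auto
  note q\<^sub>1_props = is_basis_restr[OF this(1), folded q\<^sub>1] has_mult_restr[OF this(1), folded q\<^sub>1]
    and q\<^sub>2_props = is_basis_restr[OF this(2), folded q\<^sub>2] has_mult_restr[OF this(2), folded q\<^sub>2]
  have "has_mult p \<longleftrightarrow> \<not> distinct \<rho> \<or> \<not> distinct \<sigma>"
    by (simp add: p_eq has_mult_def)
  with distinct_\<sigma> distinct_\<rho> q\<^sub>1_props q\<^sub>2_props show ?thesis by blast
qed

lemma finite_mult_basis_support: "finite {q. mult_basis p p' q \<noteq> 0}"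
proof (rule finite_subset)
  show "{q. mult_basis p p' q \<noteq> 0} \<subseteq>
      set_mset (image_mset (\<lambda>\<gamma>. canon (fst p @ shift (shift_bound p) (fst p'), \<gamma>))
        (shuffle_ms (snd p) (shift (shift_bound p) (snd p'))))"
    unfolding mult_basis_def Let_def ms_vec_def by (auto simp: count_eq_zero_iff)
qed simp

lemma finite_comult_basis_support: "finite {q. comult_basis p q \<noteq> 0}"
proof (rule finite_subset)
  let ?cut = "\<lambda>k. (restr (fst p) (take k (snd p)), restr (fst p) (drop k (snd p)))"
  show "{q. comult_basis p q \<noteq> 0} \<subseteq> ?cut ` {..length (snd p)}"
  proof
    fix q assume "q \<in> {q. comult_basis p q \<noteq> 0}"
    then obtain k where k: "good_cut (snd p) k" and q: "q = ?cut k"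
      by (auto elim: comult_basis_nonzero_good_cut)
    from k have "k \<in> {..length (snd p)}" by (simp add: good_cut_def)
    then show "q \<in> ?cut ` {..length (snd p)}" unfolding q by (rule imageI)
  qed
qed simp

lemma hmult_nonzero:
  assumes z: "z \<in> dWHA2" and q: "hmult z q \<noteq> 0"
  obtains p p' where "z (p, p') \<noteq> 0" and "is_basis q" and "has_mult q \<longleftrightarrow> has_mult p \<or> has_mult p'"
proof -
  obtain r where r: "z r \<noteq> 0" "(case r of (p, p') \<Rightarrow> mult_basis p p') q \<noteq> 0"
    using q unfolding hmult_def by (rule lin_nonzero)
  obtain p p' where "r = (p, p')" by (rule prod.exhaust)
  with r have pp': "z (p, p') \<noteq> 0" "mult_basis p p' q \<noteq> 0" by simp_all
  then have "is_basis p" "is_basis p'" using z unfolding dWHA2_def by blast+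
  then show thesis using that pp' mult_basis_nonzero by blast
qed

lemma finite_hmult_support: "z \<in> dWHA2 \<Longrightarrow> finite {q. hmult z q \<noteq> 0}"
  unfolding hmult_def
  by (rule finite_lin_support) (auto simp: dWHA2_def finite_mult_basis_support split: prod.splits)

lemma hcomult_nonzero:
  assumes x: "x \<in> dWHA" and q: "hcomult x (q\<^sub>1, q\<^sub>2) \<noteq> 0"
  obtains p where "x p \<noteq> 0" and "is_basis q\<^sub>1" and "is_basis q\<^sub>2"
    and "has_mult p \<longleftrightarrow> has_mult q\<^sub>1 \<or> has_mult q\<^sub>2"
proof -
  obtain p where p: "x p \<noteq> 0" "comult_basis p (q\<^sub>1, q\<^sub>2) \<noteq> 0"
    using q unfolding hcomult_def by (rule lin_nonzero)
  then have "valid_subst p" using x unfolding dWHA_def is_basis_def by blast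
  then show thesis using that p comult_basis_nonzero by blast
qed

lemma finite_hcomult_support: "x \<in> dWHA \<Longrightarrow> finite {q. hcomult x q \<noteq> 0}"
  unfolding hcomult_def
  by (rule finite_lin_support) (auto simp: dWHA_def finite_comult_basis_support)

lemma hmult_in_J_mult:
  assumes z: "z \<in> dWHA2" and mult: "\<And>p p'. z (p, p') \<noteq> 0 \<Longrightarrow> has_mult p \<or> has_mult p'"
  shows "hmult z \<in> J_mult"
proof -
  have "is_basis q \<and> has_mult q" if q: "hmult z q \<noteq> 0" for q
  proof -
    obtain p p' where "z (p, p') \<noteq> 0" "is_basis q" "has_mult q \<longleftrightarrow> has_mult p \<or> has_mult p'"
      by (rule hmult_nonzero[OF z q])
    then show ?thesis using mult[of p p'] by simp
  qed
  then show ?thesis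
    using finite_hmult_support[OF z] unfolding J_mult_def dWHA_def by blast
qed

lemma hmult_J_tens_A: "z \<in> J_tens_A \<Longrightarrow> hmult z \<in> J_mult"
  by (rule hmult_in_J_mult) (auto simp: J_tens_A_def)

lemma hmult_A_tens_J: "z \<in> A_tens_J \<Longrightarrow> hmult z \<in> J_mult"
  by (rule hmult_in_J_mult) (auto simp: A_tens_J_def)

lemma dWHA2_split_J:
  assumes z: "z \<in> dWHA2" and mult: "\<And>p p'. z (p, p') \<noteq> 0 \<Longrightarrow> has_mult p \<or> has_mult p'"
  shows "z \<in> {(\<lambda>r. a r + b r) | a b. a \<in> J_tens_A \<and> b \<in> A_tens_J}"
proof -
  define a where "a = (\<lambda>r. if has_mult (fst r) then z r else 0)"
  define b where "b = (\<lambda>r. if has_mult (fst r) then 0 else z r)"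
  have finite_z: "finite {r. z r \<noteq> 0}" using z by (simp add: dWHA2_def)
  have "{r. a r \<noteq> 0} \<subseteq> {r. z r \<noteq> 0}" "{r. b r \<noteq> 0} \<subseteq> {r. z r \<noteq> 0}"
    by (auto simp: a_def b_def)
  then have "finite {r. a r \<noteq> 0}" "finite {r. b r \<noteq> 0}"
    using finite_z by (auto intro: finite_subset)
  moreover have "z (p, p') \<noteq> 0 \<and> has_mult p" if "a (p, p') \<noteq> 0" for p p'
    using that by (simp add: a_def split: if_splits)
  moreover have "z (p, p') \<noteq> 0 \<and> has_mult p'" if "b (p, p') \<noteq> 0" for p p'
    using that mult[of p p'] by (simp add: b_def split: if_splits)
  ultimately have "a \<in> J_tens_A" "b \<in> A_tens_J"
    using z unfolding J_tens_A_def A_tens_J_def dWHA2_def by blast+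
  moreover have "z = (\<lambda>r. a r + b r)" by (auto simp: a_def b_def)
  ultimately show ?thesis by blast
qed

lemma hcomult_J_mult:
  assumes xJ: "x \<in> J_mult"
  shows "hcomult x \<in> {(\<lambda>r. a r + b r) | a b. a \<in> J_tens_A \<and> b \<in> A_tens_J}"
proof (rule dWHA2_split_J)
  have x: "x \<in> dWHA" using xJ by (simp add: J_mult_def)
  have support: "is_basis q\<^sub>1 \<and> is_basis q\<^sub>2 \<and> (has_mult q\<^sub>1 \<or> has_mult q\<^sub>2)"
    if q: "hcomult x (q\<^sub>1, q\<^sub>2) \<noteq> 0" for q\<^sub>1 q\<^sub>2
  proof -
    obtain p where "x p \<noteq> 0" "is_basis q\<^sub>1" "is_basis q\<^sub>2" "has_mult p \<longleftrightarrow> has_mult q\<^sub>1 \<or> has_mult q\<^sub>2"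
      by (rule hcomult_nonzero[OF x q])
    moreover have "has_mult p" using xJ \<open>x p \<noteq> 0\<close> unfolding J_mult_def by blast
    ultimately show ?thesis by simp
  qed
  then show "hcomult x \<in> dWHA2"
    using finite_hcomult_support[OF x] unfolding dWHA2_def by blast
  show "has_mult q\<^sub>1 \<or> has_mult q\<^sub>2" if "hcomult x (q\<^sub>1, q\<^sub>2) \<noteq> 0" for q\<^sub>1 q\<^sub>2
    using support that by blast
qed

lemma tens_map_psi:
  assumes "finite {r. z r \<noteq> 0}"
  shows "tens_map psi psi z = (\<lambda>r. if has_mult (fst r) \<or> has_mult (snd r) then 0 else z r)"
proof
  fix r
  have "z r' * (case r' of (p, q) \<Rightarrow> tens (psi (delta p)) (psi (delta q))) r =
      (if r' = r then (if has_mult (fst r) \<or> has_mult (snd r) then 0 else z r) else 0)" for r'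
    by (cases r'; cases r) (auto simp: tens_def psi_def delta_def)
  then show "tens_map psi psi z r = (if has_mult (fst r) \<or> has_mult (snd r) then 0 else z r)"
    unfolding tens_map_def lin_def using assms by simp
qed

lemma psi_hmult:
  assumes z: "z \<in> dWHA2"
  shows "psi (hmult z) = hmult (tens_map psi psi z)"
proof
  fix q
  let ?F = "\<lambda>(p, p'). mult_basis p p'"
  have finite_z: "finite {r. z r \<noteq> 0}" using z by (simp add: dWHA2_def)
  have compatible: "has_mult q \<longleftrightarrow> has_mult (fst r) \<or> has_mult (snd r)"
    if "z r \<noteq> 0" "?F r q \<noteq> 0" for r
  proof -
    obtain p p' where r: "r = (p, p')" by (rule prod.exhaust)
    have "is_basis p" "is_basis p'" using z that(1) unfolding r dWHA2_def by blast+
    from mult_basis_nonzero[OF this] that(2) show ?thesis unfolding r by simp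
  qed
  have "psi (hmult z) q = (if has_mult q then 0 else lin ?F z q)"
    by (simp add: psi_def hmult_def)
  also have "\<dots> = lin ?F (\<lambda>r. if has_mult (fst r) \<or> has_mult (snd r) then 0 else z r) q"
    by (rule lin_mask[OF finite_z compatible, symmetric])
  also have "\<dots> = hmult (tens_map psi psi z) q"
    by (simp add: tens_map_psi[OF finite_z] hmult_def)
  finally show "psi (hmult z) q = hmult (tens_map psi psi z) q" .
qed

lemma hcomult_psi:
  assumes x: "x \<in> dWHA"
  shows "hcomult (psi x) = tens_map psi psi (hcomult x)"
proof
  fix r :: "subst \<times> subst"
  have finite_x: "finite {p. x p \<noteq> 0}" using x by (simp add: dWHA_def)
  have compatible: "has_mult (fst r) \<or> has_mult (snd r) \<longleftrightarrow> has_mult p"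
    if "x p \<noteq> 0" "comult_basis p r \<noteq> 0" for p
  proof -
    have "valid_subst p" using x that(1) unfolding dWHA_def is_basis_def by blast
    then show ?thesis using comult_basis_nonzero[of p "fst r" "snd r"] that(2) by simp
  qed
  have "hcomult (psi x) r = lin comult_basis (\<lambda>p. if has_mult p then 0 else x p) r"
    by (simp add: psi_def hcomult_def)
  also have "\<dots> = (if has_mult (fst r) \<or> has_mult (snd r) then 0 else hcomult x r)"
    unfolding hcomult_def
    by (rule lin_mask[OF finite_x compatible])
  also have "\<dots> = tens_map psi psi (hcomult x) r"
    by (simp add: tens_map_psi[OF finite_hcomult_support[OF x]])
  finally show "hcomult (psi x) r = tens_map psi psi (hcomult x) r" .
qed

lemma psi_image_dWHA: "psi ` dWHA \<subseteq> phi_MPR"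
proof
  fix y assume "y \<in> psi ` dWHA"
  then obtain x where x: "x \<in> dWHA" and y: "y = psi x" by blast
  have "{p. psi x p \<noteq> 0} \<subseteq> {p. x p \<noteq> 0}" by (auto simp: psi_def)
  then have "finite {p. psi x p \<noteq> 0}"
    using x unfolding dWHA_def by (blast intro: finite_subset)
  moreover have "is_basis p \<and> \<not> has_mult p" if "psi x p \<noteq> 0" for p
  proof -
    have "x p \<noteq> 0" "\<not> has_mult p" using that by (simp_all add: psi_def split: if_splits)
    with x show ?thesis unfolding dWHA_def by blast
  qed
  ultimately show "y \<in> phi_MPR"
    unfolding y phi_MPR_def dWHA_def by blast
qed

lemma psi_phi_MPR:
  assumes "x \<in> phi_MPR"
  shows "psi x = x"
proof
  fix p
  have "x p \<noteq> 0 \<Longrightarrow> \<not> has_mult p" using assms unfolding phi_MPR_def by blast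
  then show "psi x p = x p" unfolding psi_def by (cases "x p = 0") auto
qed

theorem mainTheorem8:
  shows "(\<forall>z \<in> J_tens_A. hmult z \<in> J_mult)
       \<and> (\<forall>z \<in> A_tens_J. hmult z \<in> J_mult)
       \<and> (\<forall>x \<in> J_mult. hcomult x \<in> {(\<lambda>q. a q + b q) | a b. a \<in> J_tens_A \<and> b \<in> A_tens_J})
       \<and> (\<forall>x \<in> J_mult. hcounit x = 0)
       \<and> (\<forall>z \<in> dWHA2. psi (hmult z) = hmult (tens_map psi psi z))
       \<and> psi hunit = hunit
       \<and> (\<forall>x \<in> dWHA. hcomult (psi x) = tens_map psi psi (hcomult x))
       \<and> (\<forall>x \<in> dWHA. hcounit (psi x) = hcounit x)
       \<and> psi ` dWHA \<subseteq> phi_MPR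
       \<and> (\<forall>x \<in> phi_MPR. psi x = x)"
proof (intro conjI ballI)
  have empty_no_mult: "\<not> has_mult ([], [])" by (simp add: has_mult_def)
  show "hcounit x = 0" if "x \<in> J_mult" for x
    using that empty_no_mult unfolding J_mult_def hcounit_def by blast
  show "psi hunit = hunit" "hcounit (psi x) = hcounit x" for x
    using empty_no_mult by (auto simp: psi_def hunit_def delta_def hcounit_def)
qed (fact hmult_J_tens_A hmult_A_tens_J hcomult_J_mult psi_hmult hcomult_psi
       psi_image_dWHA psi_phi_MPR)+

end
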